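(* Let $\hat\Phi\colon\mathcal{X}\to\mathbb{R}^{N_2}$ be a ReLU network with one hidden layer of $N_1$ neurons, $\hat\Phi(x)=\sum_{i=1}^{N_1}\hat w_{2,i}\phi(\langle\hat w_{1,i},x\rangle-\hat b_{1,i})-\hat b_{2,i}$ with nonzero $\hat w_{1,i}$, whose biases are of the form $\hat b_{1,i}=\langle\hat w_{1,i},x_i\rangle$ with $x_i\in\mathcal{X}$ for $i=1,\dots,N_1$. Then for any $\epsilon>0$ there exists a unit sampled network $\Phi$ with one hidden layer such that $\sup_{x\in\mathcal{X}}\|\Phi(x)-\hat\Phi(x)\|<\epsilon$.
   Context: Fix $D\ge1$, Euclidean norm and inner product on $\mathbb{R}^D$, $\phi(t)=\max\{t,0\}$. For $A\subseteq\mathbb{R}^D$ let $d(z,A)=\inf_{a\in A}\|z-a\|$, $\mathrm{Med}(A)=\{z:\exists p\neq q\in A,\ \|p-z\|=\|q-z\|=d(z,A)\}$, reach $\tau_A=\inf_{a\in A}d(a,\mathrm{Med}(A))$. Let $\mathcal{X}'\subset\mathbb{R}^D$ be nonempty compact with $\tau_{\mathcal{X}'}>0$, fix $0<\epsilon_I<\min\{\tau_{\mathcal{X}'},1\}$, and $\mathcal{X}=\{x:d(x,\mathcal{X}')\le\epsilon_I\}$. A unit sampled network with one hidden layer is $\Phi(x)=\sum_i w_{2,i}\phi(\langle w_{1,i},x\rangle-b_{1,i})-b_{2,i}$ where for each hidden neuron there are distinct $x^{(1)}_{0,i},x^{(2)}_{0,i}\in\mathcal{X}$ with $w_{1,i}=\frac{x^{(2)}_{0,i}-x^{(1)}_{0,i}}{\|x^{(2)}_{0,i}-x^{(1)}_{0,i}\|}$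 and $b_{1,i}=\langle w_{1,i},x^{(1)}_{0,i}\rangle$; the output parameters $w_{2,i},b_{2,i}$ are unrestricted. *)

theory Defs
  imports "HOL-Analysis.Analysis"
begin

definition relu :: "real \<Rightarrow> real" where
  "relu t = max t 0"

text \<open>Medial axis and reach. The reach is ereal-valued so that an empty medial axis
  gives reach = infinity (inf over the empty set), as in the paper.\<close>
definition medial_axis :: "'a::real_normed_vector set \<Rightarrow> 'a set" where
  "medial_axis A = {z. \<exists>p q. p \<in> A \<and> q \<in> A \<and> p \<noteq> q \<and>
      dist p z = infdist z A \<and> dist q z = infdist z A}"

definition reach :: "'a::real_normed_vector set \<Rightarrow> ereal" where
  "reach A = (INF a\<in>A. INF z\<in>medial_axis A. ereal (dist a z))"

definition shallow_net ::
  "nat \<Rightarrow> (nat \<Rightarrow> 'a::euclidean_space) \<Rightarrow> (nat \<Rightarrow> real) \<Rightarrow> (nat \<Rightarrow> 'b::real_normed_vector)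
     \<Rightarrow> (nat \<Rightarrow> 'b) \<Rightarrow> 'a \<Rightarrow> 'b" where
  "shallow_net N w1 b1 w2 b2 x = (\<Sum>i<N. relu (w1 i \<bullet> x - b1 i) *\<^sub>R w2 i - b2 i)"

definition unit_sampled :: "'a::euclidean_space set \<Rightarrow> nat \<Rightarrow> (nat \<Rightarrow> 'a) \<Rightarrow> (nat \<Rightarrow> real) \<Rightarrow> bool" where
  "unit_sampled X N w1 b1 \<longleftrightarrow> (\<forall>i<N. \<exists>p q. p \<in> X \<and> q \<in> X \<and> p \<noteq> q \<and>
      w1 i = (1 / norm (q - p)) *\<^sub>R (q - p) \<and> b1 i = w1 i \<bullet> p)"

end

theory Submission
  imports Defs
begin

text \<open>A neuron \<open>relu (w \<bullet> x - w \<bullet> y) *\<^sub>R v\<close> with \<open>w \<noteq> 0\<close> equals the neuron with unit direction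
  \<open>sgn w\<close>, bias point \<open>y\<close> and output weight \<open>norm w *\<^sub>R v\<close>; it is unit sampled once \<open>y\<close> and
  \<open>y + \<delta> *\<^sub>R sgn w\<close> both lie in \<open>X\<close> for some \<open>\<delta> > 0\<close>. This can fail for \<open>y\<close> on the boundary
  of \<open>X\<close>, but as \<open>X\<close> is a closed \<open>\<epsilon>I\<close>-neighbourhood of \<open>X'\<close>, moving \<open>y\<close> a distance
  \<open>\<delta> \<le> \<epsilon>I\<close> towards a nearest point of \<open>X'\<close> leaves room for a step of length \<open>\<delta>\<close> in every
  direction. Since \<open>relu\<close> is 1-Lipschitz, the moved neuron is uniformly within
  \<open>\<delta> * norm w * norm v\<close> of the original, so a small \<open>\<delta>\<close> gives total error below \<open>\<epsilon>\<close>.\<close>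

lemma relu_mult_nonneg: "0 \<le> k \<Longrightarrow> relu (k * a) = k * relu a"
  unfolding relu_def by (simp add: max_def mult_le_0_iff)

lemma abs_relu_diff_le: "\<bar>relu a - relu b\<bar> \<le> \<bar>a - b\<bar>"
  unfolding relu_def by (auto simp: max_def)

lemma relu_neuron_normalize:
  fixes w :: "'a::euclidean_space" and v :: "'b::real_normed_vector"
  shows "relu (w \<bullet> x - w \<bullet> y) *\<^sub>R v = relu (sgn w \<bullet> x - sgn w \<bullet> y) *\<^sub>R (norm w *\<^sub>R v)"
proof -
  have "norm w *\<^sub>R sgn w = w"
    by (cases "w = 0") (simp_all add: sgn_div_norm)
  then have "w \<bullet> x - w \<bullet> y = norm w * (sgn w \<bullet> x - sgn w \<bullet> y)"
    by (metis inner_diff_right inner_scaleR_left)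
  then show ?thesis
    by (simp add: relu_mult_nonneg)
qed

lemma norm_relu_neuron_shift_le:
  fixes u :: "'a::real_inner" and v :: "'b::real_normed_vector"
  shows "norm (relu (u \<bullet> x - u \<bullet> p) *\<^sub>R v - relu (u \<bullet> x - u \<bullet> y) *\<^sub>R v)
           \<le> norm u * norm (p - y) * norm v"
proof -
  have "\<bar>relu (u \<bullet> x - u \<bullet> p) - relu (u \<bullet> x - u \<bullet> y)\<bar> \<le> \<bar>u \<bullet> (p - y)\<bar>"
    using abs_relu_diff_le[of "u \<bullet> x - u \<bullet> p" "u \<bullet> x - u \<bullet> y"]
    by (simp add: inner_diff_right)
  also have "\<dots> \<le> norm u * norm (p - y)"
    by (rule Cauchy_Schwarz_ineq2)
  finally show ?thesis
    by (simp add: scaleR_diff_left[symmetric] mult_right_mono)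
qed

lemma infdist_le_shift_toward_nearest:
  fixes A :: "'a::euclidean_space set"
  assumes "closed A" "A \<noteq> {}" "infdist y A \<le> r" "0 < \<delta>" "\<delta> \<le> r" "norm u = 1"
  obtains p where "infdist p A \<le> r" "infdist (p + \<delta> *\<^sub>R u) A \<le> r" "dist p y \<le> \<delta>"
proof -
  obtain a where a: "a \<in> A" "infdist y A = dist y a"
    using infdist_attains_inf[OF assms(1,2)] by blast
  define p where "p = y + (\<delta> / r) *\<^sub>R (a - y)"
  have ratio: "0 < \<delta> / r" "\<delta> / r \<le> 1"
    using assms(4,5) by auto
  have "p - a = (1 - \<delta> / r) *\<^sub>R (y - a)"
    by (simp add: p_def algebra_simps)
  then have "dist p a = (1 - \<delta> / r) * dist y a"
    using ratio by (simp add: dist_norm)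
  also have "\<dots> \<le> (1 - \<delta> / r) * r"
    using a assms(3) ratio by (intro mult_left_mono) auto
  also have "\<dots> = r - \<delta>"
    using assms(4,5) by (simp add: field_simps)
  finally have pa: "dist p a \<le> r - \<delta>" .
  have "dist (p + \<delta> *\<^sub>R u) a \<le> dist p a + \<delta>"
    using norm_triangle_ineq[of "p - a" "\<delta> *\<^sub>R u"] assms(4,6)
    by (simp add: dist_norm algebra_simps)
  then have "dist (p + \<delta> *\<^sub>R u) a \<le> r"
    using pa by simp
  then have "infdist (p + \<delta> *\<^sub>R u) A \<le> r"
    by (rule infdist_le2[OF a(1)])
  moreover have "infdist p A \<le> r"
    using infdist_le2[OF a(1), of p r] pa assms(4) by linarith
  moreover have "dist p y \<le> \<delta>"
  proof -
    have "dist p y = (\<delta> / r) * dist y a"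
      using assms(4,5) by (simp add: p_def dist_norm norm_minus_commute)
    also have "\<dots> \<le> (\<delta> / r) * r"
      using a assms(3) ratio by (intro mult_left_mono) auto
    also have "\<dots> = \<delta>"
      using assms(4,5) by simp
    finally show ?thesis .
  qed
  ultimately show thesis
    using that by blast
qed

lemma unit_sampled_neuron_approx:
  fixes A :: "'a::euclidean_space set" and v :: "'b::real_normed_vector"
  assumes "closed A" "A \<noteq> {}" "infdist y A \<le> r" "0 < \<delta>" "\<delta> \<le> r" "w \<noteq> 0"
  obtains p q where "infdist p A \<le> r" "infdist q A \<le> r" "p \<noteq> q"
    "sgn w = (1 / norm (q - p)) *\<^sub>R (q - p)"
    "\<And>x. norm (relu (sgn w \<bullet> x - sgn w \<bullet> p) *\<^sub>R (norm w *\<^sub>R v) - relu (w \<bullet> x - w \<bullet> y) *\<^sub>R v)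
            \<le> \<delta> * (norm w * norm v)"
proof -
  have unit: "norm (sgn w) = 1"
    using assms(6) by (simp add: norm_sgn)
  obtain p where p: "infdist p A \<le> r" "infdist (p + \<delta> *\<^sub>R sgn w) A \<le> r" "dist p y \<le> \<delta>"
    using infdist_le_shift_toward_nearest[OF assms(1-5) unit] by blast
  have step: "(p + \<delta> *\<^sub>R sgn w) - p = \<delta> *\<^sub>R sgn w"
    by simp
  have "p \<noteq> p + \<delta> *\<^sub>R sgn w"
    using assms(4) unit by auto
  moreover have "sgn w = (1 / norm ((p + \<delta> *\<^sub>R sgn w) - p)) *\<^sub>R ((p + \<delta> *\<^sub>R sgn w) - p)"
    using assms(4) unit by (simp only: step) simp
  moreover have "norm (relu (sgn w \<bullet> x - sgn w \<bullet> p) *\<^sub>R (norm w *\<^sub>R v) - relu (w \<bullet> x - w \<bullet> y) *\<^sub>R v)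
            \<le> \<delta> * (norm w * norm v)" for x
  proof -
    have "norm (relu (sgn w \<bullet> x - sgn w \<bullet> p) *\<^sub>R (norm w *\<^sub>R v) - relu (w \<bullet> x - w \<bullet> y) *\<^sub>R v)
        \<le> norm (p - y) * (norm w * norm v)"
      using norm_relu_neuron_shift_le[of "sgn w" x p "norm w *\<^sub>R v" y] unit
      by (simp add: relu_neuron_normalize[of w x y v])
    also have "\<dots> \<le> \<delta> * (norm w * norm v)"
      using p(3) by (intro mult_right_mono) (simp_all add: dist_norm)
    finally show ?thesis .
  qed
  ultimately show thesis
    using that p(1,2) by blast
qed

lemma norm_shallow_net_diff_le:
  assumes "\<And>i. i < N \<Longrightarrow>
    norm (relu (v1 i \<bullet> x - c1 i) *\<^sub>R v2 i - relu (w1 i \<bullet> x - b1 i) *\<^sub>R w2 i) \<le> e i"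
  shows "norm (shallow_net N v1 c1 v2 b2 x - shallow_net N w1 b1 w2 b2 x) \<le> (\<Sum>i<N. e i)"
proof -
  have "shallow_net N v1 c1 v2 b2 x - shallow_net N w1 b1 w2 b2 x
      = (\<Sum>i<N. relu (v1 i \<bullet> x - c1 i) *\<^sub>R v2 i - relu (w1 i \<bullet> x - b1 i) *\<^sub>R w2 i)"
    unfolding shallow_net_def by (simp add: sum_subtractf[symmetric])
  also have "norm \<dots> \<le> (\<Sum>i<N. norm (relu (v1 i \<bullet> x - c1 i) *\<^sub>R v2 i - relu (w1 i \<bullet> x - b1 i) *\<^sub>R w2 i))"
    by (rule norm_sum)
  also have "\<dots> \<le> (\<Sum>i<N. e i)"
    using assms by (intro sum_mono) simp
  finally show ?thesis .
qed

lemma unit_sampled_shallow_net_approx: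
  fixes A :: "'a::euclidean_space set" and w2 :: "nat \<Rightarrow> 'b::real_normed_vector"
  assumes "closed A" "A \<noteq> {}" "0 < \<delta>" "\<delta> \<le> r"
    and "\<forall>i<N. w1 i \<noteq> 0" "\<forall>i<N. infdist (xs i) A \<le> r \<and> b1 i = w1 i \<bullet> xs i"
  obtains v1 c1 where "unit_sampled {x. infdist x A \<le> r} N v1 c1"
    "\<And>x. norm (shallow_net N v1 c1 (\<lambda>i. norm (w1 i) *\<^sub>R w2 i) b2 x - shallow_net N w1 b1 w2 b2 x)
            \<le> \<delta> * (\<Sum>i<N. norm (w1 i) * norm (w2 i))"
proof -
  define v1 where "v1 i = sgn (w1 i)" for i
  define v2 where "v2 i = norm (w1 i) *\<^sub>R w2 i" for i
  define sampled_approx where "sampled_approx i p q \<longleftrightarrow>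
      infdist p A \<le> r \<and> infdist q A \<le> r \<and> p \<noteq> q \<and> v1 i = (1 / norm (q - p)) *\<^sub>R (q - p) \<and>
      (\<forall>x. norm (relu (v1 i \<bullet> x - v1 i \<bullet> p) *\<^sub>R v2 i - relu (w1 i \<bullet> x - b1 i) *\<^sub>R w2 i)
            \<le> \<delta> * (norm (w1 i) * norm (w2 i)))" for i p q
  have "\<exists>p q. sampled_approx i p q" if "i < N" for i
    unfolding sampled_approx_def
  proof (rule unit_sampled_neuron_approx[OF assms(1-2) _ assms(3-4)])
    show "infdist (xs i) A \<le> r" "w1 i \<noteq> 0"
      using assms(5,6) that by auto
  qed (use assms(6) that in \<open>auto simp: v1_def v2_def\<close>)
  then obtain p q where pq: "\<And>i. i < N \<Longrightarrow> sampled_approx i (p i) (q i)"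
    by metis
  define c1 where "c1 i = v1 i \<bullet> p i" for i
  have "unit_sampled {x. infdist x A \<le> r} N v1 c1"
    unfolding unit_sampled_def c1_def using pq unfolding sampled_approx_def by blast
  moreover have "norm (shallow_net N v1 c1 v2 b2 x - shallow_net N w1 b1 w2 b2 x)
      \<le> \<delta> * (\<Sum>i<N. norm (w1 i) * norm (w2 i))" for x
  proof -
    have "norm (relu (v1 i \<bullet> x - c1 i) *\<^sub>R v2 i - relu (w1 i \<bullet> x - b1 i) *\<^sub>R w2 i)
        \<le> \<delta> * (norm (w1 i) * norm (w2 i))" if "i < N" for i
      using pq[OF that] unfolding sampled_approx_def c1_def by blast
    then have "norm (shallow_net N v1 c1 v2 b2 x - shallow_net N w1 b1 w2 b2 x)
        \<le> (\<Sum>i<N. \<delta> * (norm (w1 i) * norm (w2 i)))"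
      by (rule norm_shallow_net_diff_le)
    then show ?thesis
      by (simp add: sum_distrib_left)
  qed
  ultimately show thesis
    using that unfolding v2_def by blast
qed

theorem lemma3:
  fixes X' :: "'a::euclidean_space set" and \<epsilon>I :: real
    and N :: nat and w1 :: "nat \<Rightarrow> 'a" and b1 :: "nat \<Rightarrow> real"
    and w2 :: "nat \<Rightarrow> 'b::euclidean_space" and b2 :: "nat \<Rightarrow> 'b"
    and xs :: "nat \<Rightarrow> 'a" and \<epsilon> :: real
  assumes "compact X'" and "X' \<noteq> {}" and "reach X' > 0"
    and "0 < \<epsilon>I" and "ereal \<epsilon>I < reach X'" and "\<epsilon>I < 1"
    and "X = {x. infdist x X' \<le> \<epsilon>I}"
    and "\<forall>i<N. w1 i \<noteq> 0"
    and "\<forall>i<N. xs i \<in> X \<and> b1 i = w1 i \<bullet> xs i"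
    and "\<epsilon> > 0"
  shows "\<exists>M v1 c1 (v2 :: nat \<Rightarrow> 'b) c2. unit_sampled X M v1 c1 \<and>
           (SUP x\<in>X. ereal (norm (shallow_net M v1 c1 v2 c2 x - shallow_net N w1 b1 w2 b2 x)))
             < ereal \<epsilon>"
proof -
  define K where "K = (\<Sum>i<N. norm (w1 i) * norm (w2 i))"
  define \<delta> where "\<delta> = min \<epsilon>I (\<epsilon> / (1 + K))"
  have K: "0 \<le> K"
    unfolding K_def by (simp add: sum_nonneg)
  have \<delta>: "0 < \<delta>" "\<delta> \<le> \<epsilon>I"
    using assms(4,10) K by (simp_all add: \<delta>_def)
  have "\<forall>i<N. infdist (xs i) X' \<le> \<epsilon>I \<and> b1 i = w1 i \<bullet> xs i"
    using assms(7,9) by auto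
  then obtain v1 c1 where "unit_sampled X N v1 c1"
    and err: "\<And>x. norm (shallow_net N v1 c1 (\<lambda>i. norm (w1 i) *\<^sub>R w2 i) b2 x
                        - shallow_net N w1 b1 w2 b2 x) \<le> \<delta> * K"
    unfolding assms(7) K_def
    by (rule unit_sampled_shallow_net_approx[where ?w2.0 = w2 and ?b2.0 = b2,
          OF compact_imp_closed[OF assms(1)] assms(2) \<delta> assms(8)]) blast
  have "\<delta> * K \<le> \<epsilon> / (1 + K) * K"
    using K by (intro mult_right_mono) (simp_all add: \<delta>_def)
  also have "\<dots> < \<epsilon>"
    using K assms(10) by (simp add: field_simps)
  finally have "\<delta> * K < \<epsilon>" .
  have "(SUP x\<in>X. ereal (norm (shallow_net N v1 c1 (\<lambda>i. norm (w1 i) *\<^sub>R w2 i) b2 x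
                               - shallow_net N w1 b1 w2 b2 x))) \<le> ereal (\<delta> * K)"
    by (rule SUP_least) (simp add: err)
  also have "\<dots> < ereal \<epsilon>"
    using \<open>\<delta> * K < \<epsilon>\<close> by simp
  finally show ?thesis
    using \<open>unit_sampled X N v1 c1\<close> by blast
qed

end
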